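(* Suppose that $(A_1,B_1)$ and $(A_2,B_2)$ are pairs of Gram mates. Then $A_1\otimes A_2$ and $B_1\otimes B_2$ are Gram mates, where $\otimes$ denotes the Kronecker product.
   Context: Two $(0,1)$ matrices $A,B$ are Gram mates if $AA^T=BB^T$, $A^TA=B^TB$ and $A\neq B$. *)

theory Defs
  imports "HOL-Analysis.Analysis"
begin

definition zero_one_matrix :: "real ^ 'n ^ 'm \<Rightarrow> bool" where
  "zero_one_matrix A \<longleftrightarrow> (\<forall>i j. A $ i $ j = 0 \<or> A $ i $ j = 1)"

definition gram_mates :: "real ^ 'n ^ 'm \<Rightarrow> real ^ 'n ^ 'm \<Rightarrow> bool" where
  "gram_mates A B \<longleftrightarrow> zero_one_matrix A \<and> zero_one_matrix B \<and>
     A ** transpose A = B ** transpose B \<and>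
     transpose A ** A = transpose B ** B \<and> A \<noteq> B"

text \<open>Kronecker product; rows/columns indexed by pairs, ordered lexicographically.\<close>
definition kronecker :: "real ^ 'n1 ^ 'm1 \<Rightarrow> real ^ 'n2 ^ 'm2 \<Rightarrow> real ^ ('n1 \<times> 'n2) ^ ('m1 \<times> 'm2)" where
  "kronecker A B = (\<chi> i j. A $ fst i $ fst j * B $ snd i $ snd j)"

end

theory Submission
  imports Defs
begin

text \<open>The Gram equations pass to the Kronecker product by the mixed-product rule
  \<open>(A \<otimes> B)(C \<otimes> D) = AC \<otimes> BD\<close> together with \<open>(A \<otimes> B)\<^sup>T = A\<^sup>T \<otimes> B\<^sup>T\<close>, and
  products of 0/1 entries are 0/1. The only real point is \<open>A\<^sub>1 \<otimes> A\<^sub>2 \<noteq> B\<^sub>1 \<otimes> B\<^sub>2\<close>.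
  A Gram mate \<open>A\<close> is nonzero, since \<open>A = 0\<close> forces \<open>B B\<^sup>T = 0\<close>, hence \<open>B = 0 = A\<close>.
  Choosing an entry \<open>A\<^sub>2 k l = 1\<close>, equality of the Kronecker products would give
  \<open>A\<^sub>1 = B\<^sub>2 k l \<cdot> B\<^sub>1\<close>, i.e. \<open>A\<^sub>1 = 0\<close> or \<open>A\<^sub>1 = B\<^sub>1\<close>, both impossible.\<close>

lemma transpose_kronecker: "transpose (kronecker A B) = kronecker (transpose A) (transpose B)"
  by (simp add: kronecker_def transpose_def vec_eq_iff)

lemma kronecker_mult_kronecker:
  fixes A :: "real ^ 'n1 ^ 'm1" and C :: "real ^ 'p1 ^ 'n1"
    and B :: "real ^ 'n2 ^ 'm2" and D :: "real ^ 'p2 ^ 'n2"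
  shows "kronecker A B ** kronecker C D = kronecker (A ** C) (B ** D)"
proof -
  have "(\<Sum>k\<in>UNIV. A $ i $ fst k * B $ i' $ snd k * (C $ fst k $ j * D $ snd k $ j'))
      = (\<Sum>a\<in>UNIV. A $ i $ a * C $ a $ j) * (\<Sum>b\<in>UNIV. B $ i' $ b * D $ b $ j')" for i i' j j'
  proof -
    have "(\<Sum>a\<in>UNIV. A $ i $ a * C $ a $ j) * (\<Sum>b\<in>UNIV. B $ i' $ b * D $ b $ j')
        = (\<Sum>(a, b)\<in>UNIV \<times> UNIV. (A $ i $ a * C $ a $ j) * (B $ i' $ b * D $ b $ j'))"
      by (simp add: sum_product sum.cartesian_product)
    then show ?thesis
      by (simp add: case_prod_beta mult_ac)
  qed
  then show ?thesis
    by (simp add: kronecker_def matrix_matrix_mult_def vec_eq_iff)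
qed

lemma zero_one_matrix_kronecker:
  assumes "zero_one_matrix A" and "zero_one_matrix B"
  shows "zero_one_matrix (kronecker A B)"
  using assms unfolding zero_one_matrix_def kronecker_def by fastforce

lemma matrix_mult_transpose_self_eq_0_iff:
  fixes A :: "real ^ 'n ^ 'm"
  shows "A ** transpose A = 0 \<longleftrightarrow> A = 0"
proof
  assume "A ** transpose A = 0"
  then have "inner (row i A) (row i A) = 0" for i
    using matrix_mult_transpose_dot_row[of A] by (simp add: vec_eq_iff)
  then have "row i A = 0" for i
    by simp
  then show "A = 0"
    by (simp add: row_def vec_eq_iff)
qed simp

lemma gram_mates_nonzero:
  assumes "gram_mates A B"
  shows "A \<noteq> 0"
  using assms matrix_mult_transpose_self_eq_0_iff[of B]
  by (auto simp: gram_mates_def)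

lemma kronecker_eq_imp_scaleR_eq:
  assumes "kronecker A1 A2 = kronecker B1 B2"
  shows "A2 $ k $ l *\<^sub>R A1 = B2 $ k $ l *\<^sub>R B1"
proof -
  have "A1 $ i $ j * A2 $ k $ l = B1 $ i $ j * B2 $ k $ l" for i j
    using arg_cong[OF assms, of "\<lambda>M. M $ (i, k) $ (j, l)"] by (simp add: kronecker_def)
  then show ?thesis
    by (simp add: vec_eq_iff mult.commute)
qed

lemma kronecker_gram_mates_neq:
  assumes "gram_mates A1 B1" and "gram_mates A2 B2"
  shows "kronecker A1 A2 \<noteq> kronecker B1 B2"
proof
  assume eq: "kronecker A1 A2 = kronecker B1 B2"
  obtain k l where "A2 $ k $ l \<noteq> 0"
    using gram_mates_nonzero[OF assms(2)] by (auto simp: vec_eq_iff)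
  then have "A2 $ k $ l = 1"
    using assms(2) by (auto simp: gram_mates_def zero_one_matrix_def)
  then have A1_eq: "A1 = B2 $ k $ l *\<^sub>R B1"
    using kronecker_eq_imp_scaleR_eq[OF eq, of k l] by simp
  have "B2 $ k $ l = 0 \<or> B2 $ k $ l = 1"
    using assms(2) by (auto simp: gram_mates_def zero_one_matrix_def)
  then show False
  proof
    assume "B2 $ k $ l = 0"
    then show False
      using A1_eq gram_mates_nonzero[OF assms(1)] by simp
  next
    assume "B2 $ k $ l = 1"
    then show False
      using A1_eq assms(1) by (simp add: gram_mates_def)
  qed
qed

theorem proposition5p3:
  fixes A1 B1 :: "real ^ 'n1 ^ 'm1" and A2 B2 :: "real ^ 'n2 ^ 'm2"
  assumes "gram_mates A1 B1" and "gram_mates A2 B2"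
  shows "gram_mates (kronecker A1 A2) (kronecker B1 B2)"
proof -
  have "zero_one_matrix (kronecker A1 A2)" and "zero_one_matrix (kronecker B1 B2)"
    using assms unfolding gram_mates_def by (blast intro: zero_one_matrix_kronecker)+
  moreover have "kronecker A1 A2 ** transpose (kronecker A1 A2)
      = kronecker B1 B2 ** transpose (kronecker B1 B2)"
    and "transpose (kronecker A1 A2) ** kronecker A1 A2
      = transpose (kronecker B1 B2) ** kronecker B1 B2"
    using assms by (simp_all only: gram_mates_def transpose_kronecker kronecker_mult_kronecker)
  moreover have "kronecker A1 A2 \<noteq> kronecker B1 B2"
    using assms by (rule kronecker_gram_mates_neq)
  ultimately show ?thesis
    unfolding gram_mates_def by blast
qed

end
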